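(* Assume (A2)–(A6), with the Gaussian variables $U_{ik,\xi}$, $U_{ij,\varepsilon}$ and constants $\beta_1,\beta_2\in(0,1/2)$ from (A5). Then $$\max_{1\le k\le k_n}\max_{1\le\ell\le J_s+p}\Big|\frac{1}{nN}\sum_{i=1}^n(\xi_{ik}-U_{ik,\xi})\Big\{\sum_{j=1}^NB_{\ell,p}(j/N)\sigma(j/N)(\varepsilon_{ij}-U_{ij,\varepsilon})\Big\}\Big|=O_{a.s.}(n^{\beta_1}N^{\beta_2-1}).$$
   Context: Standing setup. Observed data follow $Y_{ij}=m(j/N)+Z_i(j/N)+\sigma(j/N)\varepsilon_{ij}$, $1\le i\le n$, $1\le j\le N$, with $Z_i(x)=\sum_{k\ge1}\xi_{ik}\phi_k(x)$, $x\in[0,1]$; $\phi_k=\sqrt{\lambda_k}\psi_k$ with $\lambda_k,\psi_k$ the eigenvalues/orthonormal eigenfunctions of $G(x,x')=\mathrm{Cov}\{Z_1(x),Z_1(x')\}$; for each $i$ the $\{\xi_{ik}\}_k$ are uncorrelated, mean $0$, variance $1$, i.i.d. across $i$; $\varepsilon_{ij}$ i.i.d. mean $0$ variance $1$, independent of the $Z_i$; $G(x,x')=C(|x-x'|)$; $h_0\in(0,1)$ fixed. Spline order $p$; $\{B_{\ell,p}\}_{\ell=1}^{J_s+p}$ is the $p$th order B-spline basis with interior knots $t_\ell=\ell/(J_s+1)$. Hölder space $\mathcal H^{(q,\mu)}[0,1]$: functions with $\|\varphi\|_{q,\mu}=\sup_{x\ne y}|\varphi^{(q)}(x)-\varphi^{(q)}(y)|/|x-y|^\mu<\infty$;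 $\|\varphi\|_\infty=\sup|\varphi|$. Here $p^*=q+\mu$ for an integer $q>0$ and $\mu\in(0,1]$ (the smoothness of $m$ in (A1)). Assumptions: (A2) $\sigma\in\mathcal H^{(0,\nu)}[0,1]$, $\nu\in(0,1]$; $\sup\sigma\le M_\sigma$, $\sup_{[0,h_0]}|C|\le M_0$. (A3) $n\to\infty$ as $N\to\infty$, $n=O(N^\theta)$, $\theta>0$. (A4) $\phi_k\in\mathcal H^{(q,\mu)}$, $\sum_k\|\phi_k\|_{q,\mu}<\infty$, $\sum_k\|\phi_k\|_\infty<\infty$; increasing integers $k_n$ with $\sum_{k>k_n}\|\phi_k\|_\infty=o(n^{-1/2})$, $k_n=O(n^\omega)$, $\omega>0$. (A5) Constants $c_1,c_2>0$, $\gamma_1,\gamma_2>1$, $\beta_1,\beta_2\in(0,1/2)$ and i.i.d. $N(0,1)$ variables $\{U_{ij,\varepsilon}\},\{U_{ik,\xi}\}$ with $\min\{\frac{2(1-\beta_2)p^*}{3+(1+\beta_1)p^*},\frac{2(\nu-\beta_2)}{1+\beta_1}\}>\theta$, $\Pr\{\max_{k\le k_n}\max_{t\le n}|\sum_{i\le t}(\xi_{ik}-U_{ik,\xi})|>n^{\beta_1}\}<c_1n^{-\gamma_1}$ and $\Pr\{\max_{i\le n}\max_{t\le N}|\sum_{j\le t}(\varepsilon_{ij}-U_{ij,\varepsilon})|>N^{\beta_2}\}<c_2N^{-\gamma_2}$. (A6) $p\ge p^*$; $J_s\asymp N^\gamma d_N$, $d_N+d_N^{-1}=O(\log^\tau N)$,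 $\tau>0$, with $\max\{\frac{5\theta}{4p^*},\frac{\theta+8\theta\beta_1/(\gamma_1+1+\omega)}{2p^*},1-\nu\}<\gamma<1-\frac\theta2-\beta_2-\frac\theta2\beta_1$. *)

theory Defs
  imports "HOL-Probability.Probability" "HOL-Library.Landau_Symbols"
begin

definition deriv_chain :: "nat \<Rightarrow> (real \<Rightarrow> real) \<Rightarrow> (nat \<Rightarrow> real \<Rightarrow> real) \<Rightarrow> bool" where
  "deriv_chain q f D \<longleftrightarrow> (\<forall>x\<in>{0..1}. D 0 x = f x) \<and>
     (\<forall>k<q. \<forall>x\<in>{0..1}. (D k has_real_derivative D (Suc k) x) (at x within {0..1}))"

definition hoelder_quot_set :: "real \<Rightarrow> (real \<Rightarrow> real) \<Rightarrow> real set" where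
  "hoelder_quot_set \<mu> g = {\<bar>g x - g y\<bar> / \<bar>x - y\<bar> powr \<mu> | x y. x \<in> {0..1} \<and> y \<in> {0..1} \<and> x \<noteq> y}"

definition in_hoelder :: "nat \<Rightarrow> real \<Rightarrow> (real \<Rightarrow> real) \<Rightarrow> bool" where
  "in_hoelder q \<mu> f \<longleftrightarrow> (\<exists>D. deriv_chain q f D \<and> bdd_above (hoelder_quot_set \<mu> (D q)))"

text \<open>The Hoelder seminorm \<open>\<parallel>f\<parallel>_{q,\<mu>}\<close> (the q-th derivative on [0,1] is unique).\<close>
definition hoelder_seminorm :: "nat \<Rightarrow> real \<Rightarrow> (real \<Rightarrow> real) \<Rightarrow> real" where
  "hoelder_seminorm q \<mu> f = (SOME s. \<exists>D. deriv_chain q f D \<and> s = Sup (hoelder_quot_set \<mu> (D q)))"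

definition sup_norm01 :: "(real \<Rightarrow> real) \<Rightarrow> real" where
  "sup_norm01 f = (SUP x\<in>{0..1}. \<bar>f x\<bar>)"

text \<open>Extended knot sequence for order p with J interior knots \<open>\<ell>/(J+1)\<close>:
  knot index m = 0 .. J+2p-1; the first p knots are 0, the last p knots are 1,
  and knot number p-1+\<ell> is \<open>\<ell>/(J+1)\<close> for \<open>\<ell> = 1..J\<close>.\<close>
definition knot :: "nat \<Rightarrow> nat \<Rightarrow> nat \<Rightarrow> real" where
  "knot J p m = min 1 (max 0 ((real m - real p + 1) / (real J + 1)))"

text \<open>Cox--de Boor recursion; \<open>bsp J r m\<close> is the order-r B-spline starting at knot m.
  Division by zero yields 0 in HOL, which is the usual 0/0 = 0 convention.\<close>
fun bsp :: "nat \<Rightarrow> nat \<Rightarrow> nat \<Rightarrow> nat \<Rightarrow> real \<Rightarrow> real" where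
  "bsp J p 0 m x = 0"
| "bsp J p (Suc 0) m x =
     (if (knot J p m \<le> x \<and> x < knot J p (Suc m)) \<or>
         (x = 1 \<and> knot J p m < 1 \<and> knot J p (Suc m) = 1) then 1 else 0)"
| "bsp J p (Suc (Suc r)) m x =
     (x - knot J p m) / (knot J p (m + Suc r) - knot J p m) * bsp J p (Suc r) m x
   + (knot J p (m + Suc (Suc r)) - x) / (knot J p (m + Suc (Suc r)) - knot J p (Suc m))
       * bsp J p (Suc r) (Suc m) x"

text \<open>\<open>B_{\<ell>,p}\<close>, \<open>\<ell> = 1..J+p\<close>, with interior knots \<open>t_\<ell> = \<ell>/(J+1)\<close>.\<close>
definition Bspline :: "nat \<Rightarrow> nat \<Rightarrow> nat \<Rightarrow> real \<Rightarrow> real" where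
  "Bspline J p l x = bsp J p p (l - 1) x"

end

theory Submission
  imports Defs "HOL-Real_Asymp.Real_Asymp"
begin

text \<open>Everything is controlled pathwise. By (A5) and Borel--Cantelli, almost surely for all large N
  every partial sum of \<open>\<xi>\<^sub>i\<^sub>k - U\<^sub>i\<^sub>k\<close> over \<open>i \<le> t \<le> n\<close> is at most \<open>n\<^bsup>\<beta>\<^sub>1\<^esup>\<close>, and every partial
  sum of \<open>\<epsilon>\<^sub>i\<^sub>j - U\<^sub>i\<^sub>j\<close> over \<open>j \<le> t \<le> N\<close> is at most \<open>N\<^bsup>\<beta>\<^sub>2\<^esup>\<close>. Summation by parts then bounds
  the inner sum over j by \<open>N\<^bsup>\<beta>\<^sub>2\<^esup>\<close> times the variation of \<open>B\<^sub>\<ell>\<^sub>,\<^sub>p \<sigma>\<close> along the grid \<open>j/N\<close>, and each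
  weight of the outer sum is at most \<open>2 n\<^bsup>\<beta>\<^sub>1\<^esup>\<close>. The grid variation of \<open>B\<^sub>\<ell>\<^sub>,\<^sub>p \<sigma>\<close> is bounded
  uniformly in \<open>\<ell>\<close> and N: B-splines have grid variation at most \<open>4\<^sup>p\<close>, and the \<open>\<nu>\<close>-Hoelder
  increments \<open>N\<^sup>-\<^sup>\<nu>\<close> of \<sigma> only count on the \<open>O(N/J\<^sub>s)\<close> grid points in the support of
  \<open>B\<^sub>\<ell>\<^sub>,\<^sub>p\<close>, which is bounded because \<open>\<gamma> > 1 - \<nu>\<close>.\<close>

definition clamp01 :: "real \<Rightarrow> real" where
  "clamp01 x = max 0 (min 1 x)"

lemma clamp01_bounds: "0 \<le> clamp01 x" "clamp01 x \<le> 1"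
  by (auto simp: clamp01_def)

lemma divide_eq_clamp01:
  fixes u v :: real
  assumes "0 \<le> u" "u \<le> v"
  shows "u / v = clamp01 (u / v)"
  using assms by (cases "v = 0") (auto simp: clamp01_def divide_le_eq_1)

lemma mono_clamp01_divide: "0 \<le> d \<Longrightarrow> mono (\<lambda>x. clamp01 ((x - c) / d))"
  unfolding clamp01_def by (intro monoI max.mono min.mono order_refl divide_right_mono) auto

lemma antimono_clamp01_divide: "0 \<le> d \<Longrightarrow> antimono (\<lambda>x. clamp01 ((c - x) / d))"
  unfolding clamp01_def by (intro antimonoI max.mono min.mono order_refl divide_right_mono) auto

lemma knot_mono: "m \<le> m' \<Longrightarrow> knot J p m \<le> knot J p m'"
  unfolding knot_def by (intro min.mono max.mono order_refl divide_right_mono) auto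

lemma knot_add_le: "knot J p (m + r) \<le> knot J p m + real r / (real J + 1)"
proof -
  have "(real (m + r) - real p + 1) / (real J + 1) = (real m - real p + 1) / (real J + 1) + real r / (real J + 1)"
    by (simp add: add_divide_distrib[symmetric] algebra_simps)
  then show ?thesis
    unfolding knot_def by (smt (verit) divide_nonneg_nonneg of_nat_0_le_iff)
qed

lemma bsp_nonzero_imp_between_knots:
  "bsp J p r m x \<noteq> 0 \<Longrightarrow> knot J p m \<le> x \<and> x \<le> knot J p (m + r)"
proof (induction J p r m x rule: bsp.induct)
  case (3 J p r m x)
  have "knot J p m \<le> knot J p (Suc m)" "knot J p (m + Suc r) \<le> knot J p (m + Suc (Suc r))"
    by (auto intro: knot_mono)
  with 3 show ?case by (fastforce split: if_splits)
qed (auto split: if_splits)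

text \<open>Clamping the Cox--de Boor weights to [0,1] does not change the spline, since each weight
  is multiplied by a spline vanishing outside the interval on which the weight lies in [0,1];
  but it turns the weights into bounded monotone functions.\<close>

lemma bsp_Suc_Suc_clamp01:
  "bsp J p (Suc (Suc r)) m x =
     clamp01 ((x - knot J p m) / (knot J p (m + Suc r) - knot J p m)) * bsp J p (Suc r) m x
   + clamp01 ((knot J p (m + Suc (Suc r)) - x) / (knot J p (m + Suc (Suc r)) - knot J p (Suc m)))
       * bsp J p (Suc r) (Suc m) x"
proof -
  have clamp: "u / v * b = clamp01 (u / v) * b" if "b \<noteq> 0 \<Longrightarrow> 0 \<le> u \<and> u \<le> v" for u v b :: real
    using that divide_eq_clamp01[of u v] by (cases "b = 0") auto
  show ?thesis
    unfolding bsp.simps(3)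
    by (intro arg_cong2[where f = "(+)"] clamp) (auto dest: bsp_nonzero_imp_between_knots)
qed

lemma abs_bsp_le: "\<bar>bsp J p r m x\<bar> \<le> 2 ^ r"
proof (induction J p r m x rule: bsp.induct)
  case (3 J p r m x)
  let ?w1 = "clamp01 ((x - knot J p m) / (knot J p (m + Suc r) - knot J p m))"
  let ?w2 = "clamp01 ((knot J p (m + Suc (Suc r)) - x) / (knot J p (m + Suc (Suc r)) - knot J p (Suc m)))"
  have "\<bar>?w1 * bsp J p (Suc r) m x\<bar> \<le> 1 * 2 ^ Suc r" "\<bar>?w2 * bsp J p (Suc r) (Suc m) x\<bar> \<le> 1 * 2 ^ Suc r"
    unfolding abs_mult using 3 clamp01_bounds by (intro mult_mono; simp)+
  then show ?case
    unfolding bsp_Suc_Suc_clamp01 by simp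
qed auto

definition grid_variation :: "nat \<Rightarrow> (real \<Rightarrow> real) \<Rightarrow> real" where
  "grid_variation N f = (\<Sum>j\<in>{1..<N}. \<bar>f (real (Suc j) / real N) - f (real j / real N)\<bar>)"

lemma grid_variation_add_le:
  "grid_variation N (\<lambda>x. f x + g x) \<le> grid_variation N f + grid_variation N g"
  unfolding grid_variation_def sum.distrib[symmetric] by (intro sum_mono) auto

lemma grid_variation_mult_le:
  assumes "\<And>x. \<bar>f x\<bar> \<le> A" "\<And>x. \<bar>g x\<bar> \<le> B"
  shows "grid_variation N (\<lambda>x. f x * g x) \<le> A * grid_variation N g + B * grid_variation N f"
  unfolding grid_variation_def sum_distrib_left sum.distrib[symmetric]
proof (intro sum_mono)
  fix j
  let ?a = "real (Suc j) / real N" and ?b = "real j / real N"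
  have "f ?a * g ?a - f ?b * g ?b = f ?a * (g ?a - g ?b) + g ?b * (f ?a - f ?b)"
    by (simp add: algebra_simps)
  then have "\<bar>f ?a * g ?a - f ?b * g ?b\<bar> \<le> \<bar>f ?a\<bar> * \<bar>g ?a - g ?b\<bar> + \<bar>g ?b\<bar> * \<bar>f ?a - f ?b\<bar>"
    by (metis abs_mult abs_triangle_ineq)
  also have "\<dots> \<le> A * \<bar>g ?a - g ?b\<bar> + B * \<bar>f ?a - f ?b\<bar>"
    using assms by (intro add_mono mult_right_mono) auto
  finally show "\<bar>f ?a * g ?a - f ?b * g ?b\<bar> \<le> A * \<bar>g ?a - g ?b\<bar> + B * \<bar>f ?a - f ?b\<bar>" .
qed

lemma grid_variation_mono_le:
  assumes "mono f" and "\<And>x. f x \<in> {a..b}"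
  shows "grid_variation N f \<le> b - a"
proof (cases "N = 0")
  case True
  then show ?thesis using assms(2)[of 0] by (simp add: grid_variation_def)
next
  case False
  have "grid_variation N f = (\<Sum>j\<in>{1..<N}. f (real (Suc j) / real N) - f (real j / real N))"
    unfolding grid_variation_def
    by (intro sum.cong refl abs_of_nonneg) (auto intro!: monoD[OF assms(1)] divide_right_mono)
  also have "\<dots> = f (real N / real N) - f (real 1 / real N)"
    using sum_Suc_diff'[of 1 N "\<lambda>j. f (real j / real N)"] False by simp
  also have "\<dots> \<le> b - a"
    using assms(2) by (intro diff_mono) auto
  finally show ?thesis .
qed

lemma grid_variation_antimono_le:
  assumes "antimono f" and "\<And>x. f x \<in> {a..b}"
  shows "grid_variation N f \<le> b - a"
proof -
  have "grid_variation N (\<lambda>x. - f x) \<le> - a - - b"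
    using assms by (intro grid_variation_mono_le) (auto simp: mono_def antimono_def)
  then show ?thesis
    by (simp add: grid_variation_def abs_minus_commute)
qed

lemma grid_variation_bsp_one_le: "grid_variation N (bsp J p (Suc 0) m) \<le> 2"
proof -
  define lo :: "real \<Rightarrow> real" where "lo x = (if knot J p m \<le> x then 1 else 0)" for x
  define hi :: "real \<Rightarrow> real" where
    "hi x = (if knot J p m < 1 \<and> knot J p (Suc m) = 1 then (if x \<le> 1 then 1 else 0)
             else (if x < knot J p (Suc m) then 1 else 0))" for x
  have "bsp J p (Suc 0) m = (\<lambda>x. lo x * hi x)"
    by (auto simp: fun_eq_iff lo_def hi_def)
  moreover have "grid_variation N lo \<le> 1 - 0"
    by (rule grid_variation_mono_le) (auto simp: lo_def mono_def)
  moreover have "grid_variation N hi \<le> 1 - 0"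
    by (rule grid_variation_antimono_le) (auto simp: hi_def antimono_def)
  moreover have "grid_variation N (\<lambda>x. lo x * hi x) \<le> 1 * grid_variation N hi + 1 * grid_variation N lo"
    by (rule grid_variation_mult_le) (auto simp: lo_def hi_def)
  ultimately show ?thesis by simp
qed

lemma grid_variation_bsp_le: "grid_variation N (bsp J p r m) \<le> 4 ^ r"
proof (induction r arbitrary: m rule: induct_nat_012)
  case 0
  then show ?case by (simp add: grid_variation_def)
next
  case 1
  then show ?case using grid_variation_bsp_one_le[of N J p m] by (simp del: bsp.simps)
next
  case (ge2 r)
  let ?w1 = "\<lambda>x. clamp01 ((x - knot J p m) / (knot J p (m + Suc r) - knot J p m))"
  let ?w2 = "\<lambda>x. clamp01 ((knot J p (m + Suc (Suc r)) - x) / (knot J p (m + Suc (Suc r)) - knot J p (Suc m)))"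
  have w1: "grid_variation N ?w1 \<le> 1 - 0"
    using knot_mono[of m "m + Suc r" J p]
    by (intro grid_variation_mono_le mono_clamp01_divide) (auto simp: clamp01_bounds)
  have w2: "grid_variation N ?w2 \<le> 1 - 0"
    using knot_mono[of "Suc m" "m + Suc (Suc r)" J p]
    by (intro grid_variation_antimono_le antimono_clamp01_divide) (auto simp: clamp01_bounds)
  have "bsp J p (Suc (Suc r)) m = (\<lambda>x. ?w1 x * bsp J p (Suc r) m x + ?w2 x * bsp J p (Suc r) (Suc m) x)"
    by (rule ext) (rule bsp_Suc_Suc_clamp01)
  then have "grid_variation N (bsp J p (Suc (Suc r)) m)
      \<le> grid_variation N (\<lambda>x. ?w1 x * bsp J p (Suc r) m x) + grid_variation N (\<lambda>x. ?w2 x * bsp J p (Suc r) (Suc m) x)"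
    by (simp only: grid_variation_add_le)
  also have "\<dots> \<le> (1 * grid_variation N (bsp J p (Suc r) m) + 2 ^ Suc r * grid_variation N ?w1)
      + (1 * grid_variation N (bsp J p (Suc r) (Suc m)) + 2 ^ Suc r * grid_variation N ?w2)"
    using abs_bsp_le[of J p "Suc r"] by (intro add_mono grid_variation_mult_le) (auto simp: clamp01_bounds simp del: power_Suc)
  also have "\<dots> \<le> (4 ^ Suc r + 2 ^ Suc r * 1) + (4 ^ Suc r + 2 ^ Suc r * 1)"
    using ge2.IH(2)[of m] ge2.IH(2)[of "Suc m"] w1 w2
    by (intro add_mono mult_left_mono) (simp_all del: power_Suc)
  also have "\<dots> \<le> 4 ^ Suc (Suc r)"
    using power_mono[of "2::real" 4 "Suc r"] by simp
  finally show ?case .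
qed

lemma card_nat_interval_le:
  fixes S :: "nat set"
  assumes "\<And>k. k \<in> S \<Longrightarrow> u \<le> real k \<and> real k \<le> u + v" and "0 \<le> v"
  shows "real (card S) \<le> v + 1"
proof -
  have "int ` S \<subseteq> {\<lceil>u\<rceil>..\<lfloor>u + v\<rfloor>}"
    using assms(1) by (auto simp: ceiling_le_iff le_floor_iff)
  then have "card (int ` S) \<le> nat (\<lfloor>u + v\<rfloor> - \<lceil>u\<rceil> + 1)"
    using card_mono[of "{\<lceil>u\<rceil>..\<lfloor>u + v\<rfloor>}"] by simp
  moreover have "card (int ` S) = card S"
    by (rule card_image) simp
  ultimately show ?thesis
    using assms(2) by linarith
qed

lemma card_grid_support_bsp_le:
  "real (card {j\<in>{1..<N}. bsp J p r m (real (Suc j) / real N) \<noteq> 0})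
     \<le> real N * real r / (real J + 1) + 1"
proof (cases "N = 0")
  case False
  then have N: "real N > 0" by simp
  show ?thesis
  proof (rule card_nat_interval_le[where u = "real N * knot J p m - 1"])
    fix j assume "j \<in> {j\<in>{1..<N}. bsp J p r m (real (Suc j) / real N) \<noteq> 0}"
    then have "knot J p m \<le> real (Suc j) / real N" "real (Suc j) / real N \<le> knot J p m + real r / (real J + 1)"
      using bsp_nonzero_imp_between_knots[of J p r m] knot_add_le[of J p m r] by force+
    then show "real N * knot J p m - 1 \<le> real j \<and> real j \<le> real N * knot J p m - 1 + real N * real r / (real J + 1)"
      using N by (simp add: field_simps)
  qed simp
qed simp

lemma grid_variation_bsp_mult_le:
  fixes \<sigma> :: "real \<Rightarrow> real"
  assumes hoelder: "\<And>x y. x \<in> {0..1} \<Longrightarrow> y \<in> {0..1} \<Longrightarrow> \<bar>\<sigma> x - \<sigma> y\<bar> \<le> L * \<bar>x - y\<bar> powr \<nu>"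
    and bound: "\<And>x. x \<in> {0..1} \<Longrightarrow> \<bar>\<sigma> x\<bar> \<le> S"
  shows "grid_variation N (\<lambda>x. bsp J p r m x * \<sigma> x)
     \<le> S * 4 ^ r + 2 ^ r * L * real N powr (-\<nu>) * (real N * real r / (real J + 1) + 1)"
proof -
  define B where "B = bsp J p r m"
  define c where "c = 2 ^ r * L * real N powr (-\<nu>)"
  have "0 \<le> L" using hoelder[of 0 1] by simp
  have "0 \<le> S" using bound[of 0] by simp
  \<comment> \<open>Split \<open>\<Delta>(B\<sigma>) = \<sigma>(b) \<Delta>B + B(a) \<Delta>\<sigma>\<close>: the second term vanishes off the support of B,
     which contains only \<open>O(N r / J)\<close> grid points.\<close>
  have increment: "\<bar>B a * \<sigma> a - B b * \<sigma> b\<bar> \<le> S * \<bar>B a - B b\<bar> + (if B a \<noteq> 0 then c else 0)"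
    if "j \<in> {1..<N}" "a = real (Suc j) / real N" "b = real j / real N" for j a b
  proof -
    have ab: "a \<in> {0..1}" "b \<in> {0..1}"
      using that by auto
    have "a - b = 1 / real N"
      using that by (simp add: diff_divide_distrib[symmetric])
    have "\<bar>B a\<bar> * \<bar>\<sigma> a - \<sigma> b\<bar> \<le> (if B a \<noteq> 0 then c else 0)"
    proof (cases "B a = 0")
      case False
      have "\<bar>\<sigma> a - \<sigma> b\<bar> \<le> L * real N powr (-\<nu>)"
        using hoelder[OF ab] \<open>a - b = 1 / real N\<close> that(1) by (simp add: powr_minus_divide powr_divide)
      then show ?thesis
        using False \<open>0 \<le> L\<close> by (simp add: c_def B_def mult.assoc) (intro mult_mono abs_bsp_le; simp)
    qed simp
    moreover have "\<bar>\<sigma> b\<bar> * \<bar>B a - B b\<bar> \<le> S * \<bar>B a - B b\<bar>"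
      using bound ab by (intro mult_right_mono) auto
    moreover have "B a * \<sigma> a - B b * \<sigma> b = \<sigma> b * (B a - B b) + B a * (\<sigma> a - \<sigma> b)"
      by algebra
    then have "\<bar>B a * \<sigma> a - B b * \<sigma> b\<bar> \<le> \<bar>\<sigma> b\<bar> * \<bar>B a - B b\<bar> + \<bar>B a\<bar> * \<bar>\<sigma> a - \<sigma> b\<bar>"
      by (metis abs_mult abs_triangle_ineq)
    ultimately show ?thesis by linarith
  qed
  have "grid_variation N (\<lambda>x. B x * \<sigma> x)
      \<le> (\<Sum>j\<in>{1..<N}. S * \<bar>B (real (Suc j) / real N) - B (real j / real N)\<bar>
                      + (if B (real (Suc j) / real N) \<noteq> 0 then c else 0))"
    unfolding grid_variation_def by (intro sum_mono increment) auto
  also have "\<dots> = S * grid_variation N B + c * real (card {j\<in>{1..<N}. B (real (Suc j) / real N) \<noteq> 0})"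
    by (simp add: sum.distrib sum_distrib_left grid_variation_def sum.inter_filter[symmetric])
  also have "\<dots> \<le> S * 4 ^ r + c * (real N * real r / (real J + 1) + 1)"
    unfolding B_def using \<open>0 \<le> L\<close> \<open>0 \<le> S\<close>
    by (intro add_mono mult_left_mono grid_variation_bsp_le card_grid_support_bsp_le) (auto simp: c_def)
  finally show ?thesis by (simp add: B_def c_def)
qed

lemma Bspline_mult_grid_variation_le:
  fixes \<sigma> :: "real \<Rightarrow> real"
  assumes hoelder: "\<And>x y. x \<in> {0..1} \<Longrightarrow> y \<in> {0..1} \<Longrightarrow> \<bar>\<sigma> x - \<sigma> y\<bar> \<le> L * \<bar>x - y\<bar> powr \<nu>"
    and bound: "\<And>x. x \<in> {0..1} \<Longrightarrow> \<bar>\<sigma> x\<bar> \<le> S"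
    and "0 < \<nu>" "1 \<le> N" and knots: "real N powr (1 - \<nu>) \<le> C * real J"
  shows "grid_variation N (\<lambda>x. Bspline J p l x * \<sigma> x) + \<bar>Bspline J p l 1 * \<sigma> 1\<bar>
     \<le> 4 ^ p * (2 * S + L * (real p * C + 1))"
proof -
  have "0 \<le> L" using hoelder[of 0 1] by simp
  have "0 \<le> S" using bound[of 0] by simp
  have "0 < real N powr (1 - \<nu>)" using \<open>1 \<le> N\<close> by simp
  with knots have "0 < C * real J" by linarith
  then have "0 \<le> C" by (auto simp: zero_less_mult_iff)
  have "real N powr (1 - \<nu>) = real N * real N powr (-\<nu>)"
    using \<open>1 \<le> N\<close> by (simp add: powr_diff powr_minus divide_inverse)
  then have "real N powr (-\<nu>) * (real N * real p / (real J + 1) + 1)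
      = real p * (real N powr (1 - \<nu>) / (real J + 1)) + real N powr (-\<nu>)"
    by (simp add: algebra_simps)
  also have "\<dots> \<le> real p * C + 1"
  proof (intro add_mono mult_left_mono)
    show "real N powr (1 - \<nu>) / (real J + 1) \<le> C"
      using knots \<open>0 \<le> C\<close> by (simp add: divide_le_eq algebra_simps)
    show "real N powr (-\<nu>) \<le> 1"
      using \<open>1 \<le> N\<close> \<open>0 < \<nu>\<close> by (simp add: powr_minus inverse_le_1_iff ge_one_powr_ge_zero)
  qed simp
  finally have "2 ^ p * L * real N powr (-\<nu>) * (real N * real p / (real J + 1) + 1) \<le> 2 ^ p * L * (real p * C + 1)"
    using \<open>0 \<le> L\<close> by (simp add: mult.assoc mult_left_mono)
  moreover have "grid_variation N (\<lambda>x. Bspline J p l x * \<sigma> x)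
      \<le> S * 4 ^ p + 2 ^ p * L * real N powr (-\<nu>) * (real N * real p / (real J + 1) + 1)"
    unfolding Bspline_def using hoelder bound by (rule grid_variation_bsp_mult_le)
  moreover have "\<bar>Bspline J p l 1 * \<sigma> 1\<bar> \<le> 2 ^ p * S"
    unfolding abs_mult Bspline_def using bound[of 1] by (intro mult_mono abs_bsp_le) auto
  moreover have "2 ^ p * L * (real p * C + 1) \<le> 4 ^ p * (L * (real p * C + 1))" "2 ^ p * S \<le> 4 ^ p * S"
    using power_mono[of "2::real" 4 p] \<open>0 \<le> L\<close> \<open>0 \<le> S\<close> \<open>0 \<le> C\<close>
    by (simp_all add: mult.assoc mult_right_mono)
  ultimately have "grid_variation N (\<lambda>x. Bspline J p l x * \<sigma> x) + \<bar>Bspline J p l 1 * \<sigma> 1\<bar>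
      \<le> S * 4 ^ p + 4 ^ p * (L * (real p * C + 1)) + 4 ^ p * S"
    by linarith
  then show ?thesis
    by (simp add: algebra_simps)
qed

lemma summation_by_parts:
  fixes b e :: "nat \<Rightarrow> real"
  shows "(\<Sum>j=1..N. b j * e j)
     = b N * (\<Sum>i=1..N. e i) - (\<Sum>j\<in>{1..<N}. (b (Suc j) - b j) * (\<Sum>i=1..j. e i))"
proof (induction N)
  case (Suc N)
  then show ?case
    by (cases "N = 0") (simp_all add: atLeastLessThanSuc algebra_simps)
qed simp

lemma abs_sum_mult_le_variation:
  fixes b e :: "nat \<Rightarrow> real"
  assumes partial: "\<And>t. t \<in> {1..N} \<Longrightarrow> \<bar>\<Sum>j=1..t. e j\<bar> \<le> R" and "0 \<le> R"
  shows "\<bar>\<Sum>j=1..N. b j * e j\<bar> \<le> R * ((\<Sum>j\<in>{1..<N}. \<bar>b (Suc j) - b j\<bar>) + \<bar>b N\<bar>)"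
proof -
  have "\<bar>b N * (\<Sum>i=1..N. e i)\<bar> \<le> \<bar>b N\<bar> * R"
    using partial[of N] \<open>0 \<le> R\<close> by (cases "N = 0") (auto simp: abs_mult intro: mult_left_mono)
  moreover have "\<bar>\<Sum>j\<in>{1..<N}. (b (Suc j) - b j) * (\<Sum>i=1..j. e i)\<bar> \<le> (\<Sum>j\<in>{1..<N}. \<bar>b (Suc j) - b j\<bar> * R)"
    by (rule order_trans[OF sum_abs], rule sum_mono) (use partial in \<open>auto simp: abs_mult intro!: mult_left_mono\<close>)
  ultimately show ?thesis
    unfolding summation_by_parts[of b e N]
    by (simp add: sum_distrib_left sum_distrib_right algebra_simps)
qed

lemma abs_le_twice_partial_sums_bound:
  fixes a :: "nat \<Rightarrow> real"
  assumes partial: "\<And>t. t \<in> {1..n} \<Longrightarrow> \<bar>\<Sum>i=1..t. a i\<bar> \<le> A" and "i \<in> {1..n}"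
  shows "\<bar>a i\<bar> \<le> 2 * A"
proof -
  have "a i = (\<Sum>k=1..i. a k) - (\<Sum>k=1..i - 1. a k)"
    using \<open>i \<in> {1..n}\<close> by (cases i) auto
  moreover have "\<bar>\<Sum>k=1..i - 1. a k\<bar> \<le> A"
  proof (cases "i = 1")
    case True
    then show ?thesis using partial[of i] \<open>i \<in> {1..n}\<close> by simp
  next
    case False
    then have "i - 1 \<in> {1..n}" using \<open>i \<in> {1..n}\<close> by auto
    then show ?thesis by (rule partial)
  qed
  ultimately show ?thesis
    using partial[of i] \<open>i \<in> {1..n}\<close> by linarith
qed

lemma abs_double_sum_le:
  fixes a b :: "nat \<Rightarrow> real" and e :: "nat \<Rightarrow> nat \<Rightarrow> real"
  assumes a: "\<And>t. t \<in> {1..n} \<Longrightarrow> \<bar>\<Sum>i=1..t. a i\<bar> \<le> A"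
    and e: "\<And>i t. i \<in> {1..n} \<Longrightarrow> t \<in> {1..N} \<Longrightarrow> \<bar>\<Sum>j=1..t. e i j\<bar> \<le> R" and "0 \<le> R"
    and b: "(\<Sum>j\<in>{1..<N}. \<bar>b (Suc j) - b j\<bar>) + \<bar>b N\<bar> \<le> V"
  shows "\<bar>\<Sum>i=1..n. a i * (\<Sum>j=1..N. b j * e i j)\<bar> \<le> real n * (2 * A * (R * V))"
proof -
  have "\<bar>a i * (\<Sum>j=1..N. b j * e i j)\<bar> \<le> 2 * A * (R * V)" if i: "i \<in> {1..n}" for i
  proof -
    have "\<bar>\<Sum>j=1..N. b j * e i j\<bar> \<le> R * ((\<Sum>j\<in>{1..<N}. \<bar>b (Suc j) - b j\<bar>) + \<bar>b N\<bar>)"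
      using e[OF i] \<open>0 \<le> R\<close> by (rule abs_sum_mult_le_variation)
    also have "\<dots> \<le> R * V"
      using b \<open>0 \<le> R\<close> by (rule mult_left_mono)
    finally show ?thesis
      unfolding abs_mult using abs_le_twice_partial_sums_bound[OF a i]
      by (intro mult_mono) (auto intro: order_trans[OF abs_ge_zero])
  qed
  then have "\<bar>\<Sum>i=1..n. a i * (\<Sum>j=1..N. b j * e i j)\<bar> \<le> (\<Sum>i=1..n. 2 * A * (R * V))"
    by (intro order_trans[OF sum_abs] sum_mono)
  then show ?thesis by simp
qed

lemma Bspline_double_sum_rate:
  fixes a :: "nat \<Rightarrow> real" and e :: "nat \<Rightarrow> nat \<Rightarrow> real" and \<sigma> :: "real \<Rightarrow> real"
  assumes hoelder: "\<And>x y. x \<in> {0..1} \<Longrightarrow> y \<in> {0..1} \<Longrightarrow> \<bar>\<sigma> x - \<sigma> y\<bar> \<le> L * \<bar>x - y\<bar> powr \<nu>"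
    and bound: "\<And>x. x \<in> {0..1} \<Longrightarrow> \<bar>\<sigma> x\<bar> \<le> S"
    and "0 < \<nu>" "1 \<le> n" "1 \<le> N" and knots: "real N powr (1 - \<nu>) \<le> C * real J"
    and a: "\<forall>t\<in>{1..n}. \<bar>\<Sum>i=1..t. a i\<bar> \<le> real n powr \<beta>\<^sub>1"
    and e: "\<forall>i\<in>{1..n}. \<forall>t\<in>{1..N}. \<bar>\<Sum>j=1..t. e i j\<bar> \<le> real N powr \<beta>\<^sub>2"
  shows "\<bar>1 / (real n * real N) * (\<Sum>i=1..n. a i *
            (\<Sum>j=1..N. Bspline J p l (real j / real N) * \<sigma> (real j / real N) * e i j))\<bar>
     \<le> 2 * 4 ^ p * (2 * S + L * (real p * C + 1)) * (real n powr \<beta>\<^sub>1 * real N powr (\<beta>\<^sub>2 - 1))"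
proof -
  define V where "V = 4 ^ p * (2 * S + L * (real p * C + 1))"
  define b where "b j = Bspline J p l (real j / real N) * \<sigma> (real j / real N)" for j
  have "(\<Sum>j\<in>{1..<N}. \<bar>b (Suc j) - b j\<bar>) + \<bar>b N\<bar> \<le> V"
    using Bspline_mult_grid_variation_le[OF hoelder bound \<open>0 < \<nu>\<close> \<open>1 \<le> N\<close> knots, of p l] \<open>1 \<le> N\<close>
    by (simp add: b_def V_def grid_variation_def)
  then have double_sum: "\<bar>\<Sum>i=1..n. a i * (\<Sum>j=1..N. b j * e i j)\<bar>
      \<le> real n * (2 * real n powr \<beta>\<^sub>1 * (real N powr \<beta>\<^sub>2 * V))"
    using a e by (intro abs_double_sum_le) auto
  have "\<bar>1 / (real n * real N) * (\<Sum>i=1..n. a i * (\<Sum>j=1..N. b j * e i j))\<bar>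
      = \<bar>\<Sum>i=1..n. a i * (\<Sum>j=1..N. b j * e i j)\<bar> / (real n * real N)"
    by (simp add: abs_mult)
  also have "\<dots> \<le> real n * (2 * real n powr \<beta>\<^sub>1 * (real N powr \<beta>\<^sub>2 * V)) / (real n * real N)"
    using double_sum by (rule divide_right_mono) simp
  also have "\<dots> = 2 * V * (real n powr \<beta>\<^sub>1 * (real N powr \<beta>\<^sub>2 / real N))"
    using \<open>1 \<le> n\<close> by (simp add: ac_simps)
  also have "real N powr \<beta>\<^sub>2 / real N = real N powr (\<beta>\<^sub>2 - 1)"
    using \<open>1 \<le> N\<close> by (simp add: powr_diff)
  finally show ?thesis
    by (simp add: b_def V_def)
qed

lemma eventually_Bspline_double_sum_rate:
  fixes a e :: "nat \<Rightarrow> nat \<Rightarrow> real" and \<sigma> :: "real \<Rightarrow> real" and n K J :: "nat \<Rightarrow> nat"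
  assumes hoelder: "\<And>x y. x \<in> {0..1} \<Longrightarrow> y \<in> {0..1} \<Longrightarrow> \<bar>\<sigma> x - \<sigma> y\<bar> \<le> L * \<bar>x - y\<bar> powr \<nu>"
    and bound: "\<And>x. x \<in> {0..1} \<Longrightarrow> \<bar>\<sigma> x\<bar> \<le> S"
    and "0 < \<nu>" and n: "filterlim n at_top at_top"
    and knots: "\<forall>\<^sub>F N in sequentially. real N powr (1 - \<nu>) \<le> C * real (J N)"
    and a: "\<forall>\<^sub>F m in sequentially. \<forall>k\<in>{1..K m}. \<forall>t\<in>{1..m}. \<bar>\<Sum>i=1..t. a k i\<bar> \<le> real m powr \<beta>\<^sub>1"
    and e: "\<forall>\<^sub>F N in sequentially. \<forall>i\<in>{1..n N}. \<forall>t\<in>{1..N}. \<bar>\<Sum>j=1..t. e i j\<bar> \<le> real N powr \<beta>\<^sub>2"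
  shows "\<exists>Q. \<forall>\<^sub>F N in sequentially. \<forall>k\<in>{1..K (n N)}. \<forall>l\<in>{1..J N + p}.
     \<bar>1 / (real (n N) * real N) * (\<Sum>i=1..n N. a k i *
        (\<Sum>j=1..N. Bspline (J N) p l (real j / real N) * \<sigma> (real j / real N) * e i j))\<bar>
     \<le> Q * (real (n N) powr \<beta>\<^sub>1 * real N powr (\<beta>\<^sub>2 - 1))"
proof -
  define Q where "Q = 2 * 4 ^ p * (2 * S + L * (real p * C + 1))"
  have "\<forall>\<^sub>F N in sequentially. \<forall>k\<in>{1..K (n N)}. \<forall>l\<in>{1..J N + p}.
     \<bar>1 / (real (n N) * real N) * (\<Sum>i=1..n N. a k i *
        (\<Sum>j=1..N. Bspline (J N) p l (real j / real N) * \<sigma> (real j / real N) * e i j))\<bar>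
     \<le> Q * (real (n N) powr \<beta>\<^sub>1 * real N powr (\<beta>\<^sub>2 - 1))"
    using eventually_compose_filterlim[OF a n] e knots
      eventually_compose_filterlim[OF eventually_ge_at_top[of 1] n] eventually_ge_at_top[of 1]
  proof eventually_elim
    case (elim N)
    then show ?case
      unfolding Q_def using \<open>0 < \<nu>\<close>
      by (intro ballI Bspline_double_sum_rate[OF hoelder bound]) auto
  qed
  then show ?thesis by blast
qed

lemma in_hoelder_zero_imp_hoelder_bound:
  assumes "in_hoelder 0 \<nu> f"
  obtains L where "\<And>x y. x \<in> {0..1} \<Longrightarrow> y \<in> {0..1} \<Longrightarrow> \<bar>f x - f y\<bar> \<le> L * \<bar>x - y\<bar> powr \<nu>"
proof -
  from assms obtain D :: "nat \<Rightarrow> real \<Rightarrow> real" and L :: real where D: "\<And>x. x \<in> {0..1} \<Longrightarrow> D 0 x = f x"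
    and L: "\<And>z. z \<in> hoelder_quot_set \<nu> (D 0) \<Longrightarrow> z \<le> L"
    unfolding in_hoelder_def deriv_chain_def bdd_above_def by blast
  have quot: "\<bar>f x - f y\<bar> \<le> L * \<bar>x - y\<bar> powr \<nu>" if "x \<in> {0..1}" "y \<in> {0..1}" "x \<noteq> y" for x y
  proof -
    have "\<bar>D 0 x - D 0 y\<bar> / \<bar>x - y\<bar> powr \<nu> \<in> hoelder_quot_set \<nu> (D 0)"
      unfolding hoelder_quot_set_def using that by blast
    then have "\<bar>f x - f y\<bar> / \<bar>x - y\<bar> powr \<nu> \<le> L"
      using L D[OF that(1)] D[OF that(2)] by simp
    then show ?thesis
      using that(3) by (simp add: pos_divide_le_eq)
  qed
  show ?thesis
  proof (rule that)
    fix x y :: real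
    assume "x \<in> {0..1}" "y \<in> {0..1}"
    then show "\<bar>f x - f y\<bar> \<le> L * \<bar>x - y\<bar> powr \<nu>"
      using quot by (cases "x = y") auto
  qed
qed

lemma hoelder_imp_abs_le:
  fixes f :: "real \<Rightarrow> real"
  assumes hoelder: "\<And>x y. x \<in> {0..1} \<Longrightarrow> y \<in> {0..1} \<Longrightarrow> \<bar>f x - f y\<bar> \<le> L * \<bar>x - y\<bar> powr \<nu>"
    and "0 \<le> \<nu>" "x \<in> {0..1}"
  shows "\<bar>f x\<bar> \<le> \<bar>f 0\<bar> + L"
proof -
  have "0 \<le> L" using hoelder[of 0 1] by simp
  have "\<bar>f x - f 0\<bar> \<le> L * x powr \<nu>"
    using hoelder[of x 0] \<open>x \<in> {0..1}\<close> by simp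
  also have "\<dots> \<le> L"
    using \<open>0 \<le> L\<close> \<open>0 \<le> \<nu>\<close> \<open>x \<in> {0..1}\<close> by (intro mult_left_le powr_le1) auto
  finally show ?thesis by linarith
qed

lemma powr_bigo_bigtheta_powr_log_factor:
  fixes J :: "nat \<Rightarrow> nat" and d :: "nat \<Rightarrow> real"
  assumes J: "(\<lambda>N. real (J N)) \<in> \<Theta>(\<lambda>N. real N powr \<gamma> * d N)" and d: "\<And>N. d N > 0"
    and inv_d: "(\<lambda>N. 1 / d N) \<in> O(\<lambda>N. ln (real N) powr \<tau>)" and "\<delta> < \<gamma>"
  shows "(\<lambda>N. real N powr \<delta>) \<in> O(\<lambda>N. real (J N))"
proof -
  obtain c where "c > 0" and c: "\<forall>\<^sub>F N in sequentially. c * (real N powr \<gamma> * d N) \<le> real (J N)"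
    using bigthetaD2[OF J] d by (elim landau_omega.bigE) (auto simp: abs_mult less_imp_le)
  obtain C where "C > 0" and C: "\<forall>\<^sub>F N in sequentially. 1 / d N \<le> C * ln (real N) powr \<tau>"
    using inv_d by (elim landau_o.bigE) (auto simp: d abs_of_pos)
  have log_le: "\<forall>\<^sub>F N in sequentially. ln (real N) powr \<tau> \<le> real N powr (\<gamma> - \<delta>)"
    using \<open>\<delta> < \<gamma>\<close> by real_asymp
  have "\<forall>\<^sub>F N in sequentially. \<bar>real N powr \<delta>\<bar> \<le> C / c * \<bar>real (J N)\<bar>"
    using c C log_le eventually_gt_at_top[of 0]
  proof eventually_elim
    case (elim N)
    have "C * ln (real N) powr \<tau> \<le> C * real N powr (\<gamma> - \<delta>)"
      using elim(3) \<open>C > 0\<close> by (intro mult_left_mono) auto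
    with elim(2) have "1 / d N \<le> C * real N powr (\<gamma> - \<delta>)"
      by linarith
    then have "1 \<le> C * real N powr (\<gamma> - \<delta>) * d N"
      using d[of N] by (simp add: pos_divide_le_eq)
    then have "real N powr \<delta> \<le> real N powr \<delta> * (C * real N powr (\<gamma> - \<delta>) * d N)"
      by (simp add: mult_le_cancel_left1)
    also have "\<dots> = C * ((real N powr \<delta> * real N powr (\<gamma> - \<delta>)) * d N)"
      by (simp add: ac_simps)
    also have "\<dots> = C / c * (c * (real N powr \<gamma> * d N))"
      using \<open>c > 0\<close> by (simp add: powr_add[symmetric])
    also have "\<dots> \<le> C / c * real (J N)"
      using elim(1) \<open>c > 0\<close> \<open>C > 0\<close> by (intro mult_left_mono) auto
    finally show ?case by simp
  qed
  then show ?thesis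
    by (intro landau_o.bigI[of "C / c"]) (use \<open>c > 0\<close> \<open>C > 0\<close> in auto)
qed

lemma borel_cantelli_powr:
  assumes "prob_space M" and sets: "\<And>n. E n \<in> sets M"
    and tail: "\<And>n. n \<ge> 1 \<Longrightarrow> measure M (E n) < c * real n powr (- g)" and "g > 1"
  shows "AE \<omega> in M. \<forall>\<^sub>F n in sequentially. \<omega> \<notin> E n"
proof -
  interpret prob_space M by fact
  have "summable (\<lambda>n. c * real n powr (- g))"
    using \<open>g > 1\<close> by (intro summable_mult) (simp add: summable_real_powr_iff)
  then have "summable (\<lambda>n. measure M (E n))"
    by (rule summable_comparison_test'[where N = 1]) (use tail in \<open>auto intro: less_imp_le\<close>)
  then have "AE \<omega> in M. \<forall>\<^sub>F n in sequentially. \<omega> \<in> space M - E n"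
    using sets by (intro borel_cantelli_AE1) (auto simp: less_top[symmetric])
  then show ?thesis
    by (rule AE_mp) (auto elim: eventually_mono)
qed

lemma AE_eventually_partial_sums_le:
  fixes X :: "nat \<Rightarrow> nat \<Rightarrow> 'a \<Rightarrow> real" and K T :: "nat \<Rightarrow> nat" and b :: "nat \<Rightarrow> real"
  assumes "prob_space M"
    and meas: "\<And>a s. a \<ge> 1 \<Longrightarrow> s \<ge> 1 \<Longrightarrow> X a s \<in> borel_measurable M"
    and tail: "\<And>n. n \<ge> 1 \<Longrightarrow> measure M {\<omega> \<in> space M. \<exists>a\<in>{1..K n}. \<exists>t\<in>{1..T n}.
                 \<bar>\<Sum>s=1..t. X a s \<omega>\<bar> > b n} < c * real n powr (- g)"
    and "g > 1"
  shows "AE \<omega> in M. \<forall>\<^sub>F n in sequentially. \<forall>a\<in>{1..K n}. \<forall>t\<in>{1..T n}. \<bar>\<Sum>s=1..t. X a s \<omega>\<bar> \<le> b n"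
proof -
  define E where "E n = {\<omega> \<in> space M. \<exists>a\<in>{1..K n}. \<exists>t\<in>{1..T n}. \<bar>\<Sum>s=1..t. X a s \<omega>\<bar> > b n}" for n
  have "E n = (\<Union>a\<in>{1..K n}. \<Union>t\<in>{1..T n}. {\<omega> \<in> space M. b n < \<bar>\<Sum>s=1..t. X a s \<omega>\<bar>})" for n
    by (auto simp: E_def)
  moreover have "(\<lambda>\<omega>. \<bar>\<Sum>s=1..t. X a s \<omega>\<bar>) \<in> borel_measurable M" if "a \<ge> 1" for a t
    using meas[OF that] by (intro borel_measurable_abs borel_measurable_sum) auto
  ultimately have "E n \<in> sets M" for n
    by (auto intro!: sets.finite_UN)
  then have "AE \<omega> in M. \<forall>\<^sub>F n in sequentially. \<omega> \<notin> E n"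
    using borel_cantelli_powr[OF \<open>prob_space M\<close> _ tail \<open>g > 1\<close>] by (simp add: E_def)
  then show ?thesis
    by (rule AE_mp) (auto simp: E_def not_less elim!: eventually_mono)
qed

theorem lemmaA9:
  fixes M :: "'a measure"
    and \<xi> \<epsilon> U\<^sub>\<xi> U\<^sub>\<epsilon> :: "nat \<Rightarrow> nat \<Rightarrow> 'a \<Rightarrow> real"
    and \<sigma> C :: "real \<Rightarrow> real"
    and lam :: "nat \<Rightarrow> real" and \<psi> \<phi> :: "nat \<Rightarrow> real \<Rightarrow> real"
    and nN kn Js :: "nat \<Rightarrow> nat" and d :: "nat \<Rightarrow> real"
    and p q :: nat
    and \<mu> \<nu> h\<^sub>0 M\<^sub>\<sigma> M\<^sub>0 \<theta> \<omega> c\<^sub>1 c\<^sub>2 \<gamma>\<^sub>1 \<gamma>\<^sub>2 \<beta>\<^sub>1 \<beta>\<^sub>2 \<gamma> \<tau> :: real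
  assumes P: "prob_space M"
  \<comment> \<open>scores \<xi>_{ik}: measurable, for each i uncorrelated with mean 0 and variance 1,
      i.i.d. across i (as sequences in k)\<close>
    and xi_meas: "\<And>i k. \<xi> i k \<in> borel_measurable M"
    and xi_int: "\<And>i k k'. integrable M (\<lambda>\<omega>. \<xi> i k \<omega> * \<xi> i k' \<omega>)"
    and xi_mean: "\<And>i k. i \<ge> 1 \<Longrightarrow> k \<ge> 1 \<Longrightarrow> prob_space.expectation M (\<xi> i k) = 0"
    and xi_cov: "\<And>i k k'. i \<ge> 1 \<Longrightarrow> k \<ge> 1 \<Longrightarrow> k' \<ge> 1 \<Longrightarrow>
        prob_space.expectation M (\<lambda>\<omega>. \<xi> i k \<omega> * \<xi> i k' \<omega>) = (if k = k' then 1 else 0)"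
    and xi_indep: "prob_space.indep_vars M (\<lambda>_. PiM {1..} (\<lambda>_. borel))
        (\<lambda>i \<omega>. \<lambda>k\<in>{1..}. \<xi> i k \<omega>) {1..}"
    and xi_ident: "\<And>i. i \<ge> 1 \<Longrightarrow> distr M (PiM {1..} (\<lambda>_. borel)) (\<lambda>\<omega>. \<lambda>k\<in>{1..}. \<xi> i k \<omega>)
        = distr M (PiM {1..} (\<lambda>_. borel)) (\<lambda>\<omega>. \<lambda>k\<in>{1..}. \<xi> 1 k \<omega>)"
  \<comment> \<open>errors \<epsilon>_{ij}: i.i.d., mean 0, variance 1, independent of the Z_i (i.e. of the scores)\<close>
    and eps_meas: "\<And>i j. \<epsilon> i j \<in> borel_measurable M"
    and eps_int: "\<And>i j. integrable M (\<lambda>\<omega>. (\<epsilon> i j \<omega>)\<^sup>2)"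
    and eps_indep: "prob_space.indep_vars M (\<lambda>_. borel) (\<lambda>(i, j). \<epsilon> i j) ({1..} \<times> {1..})"
    and eps_ident: "\<And>i j. i \<ge> 1 \<Longrightarrow> j \<ge> 1 \<Longrightarrow> distr M borel (\<epsilon> i j) = distr M borel (\<epsilon> 1 1)"
    and eps_mean: "prob_space.expectation M (\<epsilon> 1 1) = 0"
    and eps_var: "prob_space.variance M (\<epsilon> 1 1) = 1"
    and eps_xi_indep: "prob_space.indep_var M
        (PiM ({1..} \<times> {1..}) (\<lambda>_. borel)) (\<lambda>\<omega>. \<lambda>ij\<in>{1..} \<times> {1..}. \<epsilon> (fst ij) (snd ij) \<omega>)
        (PiM ({1..} \<times> {1..}) (\<lambda>_. borel)) (\<lambda>\<omega>. \<lambda>ik\<in>{1..} \<times> {1..}. \<xi> (fst ik) (snd ik) \<omega>)"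
  \<comment> \<open>covariance structure: G(x,x') = C(|x-x'|), eigenpairs (\<lambda>_k, \<psi>_k), \<phi>_k = sqrt \<lambda>_k \<psi>_k,
      Z_i(x) = \<Sum>_k \<xi>_{ik} \<phi>_k(x)\<close>
    and Z_cov: "\<And>x x'. x \<in> {0..1} \<Longrightarrow> x' \<in> {0..1} \<Longrightarrow>
        prob_space.expectation M (\<lambda>\<omega>.
          ((\<Sum>k. \<xi> 1 (Suc k) \<omega> * \<phi> (Suc k) x) - prob_space.expectation M (\<lambda>\<omega>'. \<Sum>k. \<xi> 1 (Suc k) \<omega>' * \<phi> (Suc k) x))
        * ((\<Sum>k. \<xi> 1 (Suc k) \<omega> * \<phi> (Suc k) x') - prob_space.expectation M (\<lambda>\<omega>'. \<Sum>k. \<xi> 1 (Suc k) \<omega>' * \<phi> (Suc k) x')))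
        = C \<bar>x - x'\<bar>"
    and psi_orth: "\<And>k l. k \<ge> 1 \<Longrightarrow> l \<ge> 1 \<Longrightarrow>
        integral {0..1} (\<lambda>x. \<psi> k x * \<psi> l x) = (if k = l then 1 else 0)"
    and eigen: "\<And>k x. k \<ge> 1 \<Longrightarrow> x \<in> {0..1} \<Longrightarrow>
        integral {0..1} (\<lambda>x'. C \<bar>x - x'\<bar> * \<psi> k x') = lam k * \<psi> k x"
    and lambda_nonneg: "\<And>k. k \<ge> 1 \<Longrightarrow> lam k \<ge> 0"
    and phi_def: "\<And>k x. k \<ge> 1 \<Longrightarrow> \<phi> k x = sqrt (lam k) * \<psi> k x"
    and h0: "0 < h\<^sub>0" "h\<^sub>0 < 1"
  \<comment> \<open>smoothness exponent p* = q + \<mu>\<close>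
    and q_pos: "q > 0" and mu: "0 < \<mu>" "\<mu> \<le> 1"
  \<comment> \<open>(A2)\<close>
    and A2_nu: "0 < \<nu>" "\<nu> \<le> 1"
    and A2_sigma: "in_hoelder 0 \<nu> \<sigma>"
    and A2_sup_sigma: "\<And>x. x \<in> {0..1} \<Longrightarrow> \<sigma> x \<le> M\<^sub>\<sigma>"
    and A2_C: "\<And>t. t \<in> {0..h\<^sub>0} \<Longrightarrow> \<bar>C t\<bar> \<le> M\<^sub>0"
  \<comment> \<open>(A3): n = n(N)\<close>
    and A3_lim: "filterlim nN at_top at_top"
    and A3_theta: "\<theta> > 0"
    and A3_O: "(\<lambda>N. real (nN N)) \<in> O(\<lambda>N. real N powr \<theta>)"
  \<comment> \<open>(A4)\<close>
    and A4_hoelder: "\<And>k. k \<ge> 1 \<Longrightarrow> in_hoelder q \<mu> (\<phi> k)"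
    and A4_sum_hoelder: "summable (\<lambda>k. hoelder_seminorm q \<mu> (\<phi> (Suc k)))"
    and A4_bdd: "\<And>k. k \<ge> 1 \<Longrightarrow> bdd_above ((\<lambda>x. \<bar>\<phi> k x\<bar>) ` {0..1})"
    and A4_sum_sup: "summable (\<lambda>k. sup_norm01 (\<phi> (Suc k)))"
    and A4_kn_mono: "strict_mono kn"
    and A4_tail: "(\<lambda>n. \<Sum>k. sup_norm01 (\<phi> (k + kn n + 1))) \<in> o(\<lambda>n. real n powr (-1/2))"
    and A4_omega: "\<omega> > 0"
    and A4_kn_O: "(\<lambda>n. real (kn n)) \<in> O(\<lambda>n. real n powr \<omega>)"
  \<comment> \<open>(A5)\<close>
    and A5_consts: "c\<^sub>1 > 0" "c\<^sub>2 > 0" "\<gamma>\<^sub>1 > 1" "\<gamma>\<^sub>2 > 1"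
        "0 < \<beta>\<^sub>1" "\<beta>\<^sub>1 < 1/2" "0 < \<beta>\<^sub>2" "\<beta>\<^sub>2 < 1/2"
    and A5_gauss_xi: "\<And>i k. i \<ge> 1 \<Longrightarrow> k \<ge> 1 \<Longrightarrow>
        distributed M lborel (U\<^sub>\<xi> i k) std_normal_density"
    and A5_indep_xi: "prob_space.indep_vars M (\<lambda>_. borel) (\<lambda>(i, k). U\<^sub>\<xi> i k) ({1..} \<times> {1..})"
    and A5_gauss_eps: "\<And>i j. i \<ge> 1 \<Longrightarrow> j \<ge> 1 \<Longrightarrow>
        distributed M lborel (U\<^sub>\<epsilon> i j) std_normal_density"
    and A5_indep_eps: "prob_space.indep_vars M (\<lambda>_. borel) (\<lambda>(i, j). U\<^sub>\<epsilon> i j) ({1..} \<times> {1..})"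
    and A5_rate: "min (2 * (1 - \<beta>\<^sub>2) * (q + \<mu>) / (3 + (1 + \<beta>\<^sub>1) * (q + \<mu>)))
                       (2 * (\<nu> - \<beta>\<^sub>2) / (1 + \<beta>\<^sub>1)) > \<theta>"
    and A5_xi: "\<And>n. n \<ge> 1 \<Longrightarrow> measure M {\<omega> \<in> space M. \<exists>k\<in>{1..kn n}. \<exists>t\<in>{1..n}.
         \<bar>\<Sum>i=1..t. \<xi> i k \<omega> - U\<^sub>\<xi> i k \<omega>\<bar> > real n powr \<beta>\<^sub>1} < c\<^sub>1 * real n powr (- \<gamma>\<^sub>1)"
    and A5_eps: "\<And>N. N \<ge> 1 \<Longrightarrow> measure M {\<omega> \<in> space M. \<exists>i\<in>{1..nN N}. \<exists>t\<in>{1..N}.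
         \<bar>\<Sum>j=1..t. \<epsilon> i j \<omega> - U\<^sub>\<epsilon> i j \<omega>\<bar> > real N powr \<beta>\<^sub>2} < c\<^sub>2 * real N powr (- \<gamma>\<^sub>2)"
  \<comment> \<open>(A6)\<close>
    and A6_p: "real p \<ge> q + \<mu>"
    and A6_d_pos: "\<And>N. d N > 0"
    and A6_Js: "(\<lambda>N. real (Js N)) \<in> \<Theta>(\<lambda>N. real N powr \<gamma> * d N)"
    and A6_tau: "\<tau> > 0"
    and A6_d: "(\<lambda>N. d N + 1 / d N) \<in> O(\<lambda>N. ln (real N) powr \<tau>)"
    and A6_gamma_lo: "max (max (5 * \<theta> / (4 * (q + \<mu>)))
          ((\<theta> + 8 * \<theta> * \<beta>\<^sub>1 / (\<gamma>\<^sub>1 + 1 + \<omega>)) / (2 * (q + \<mu>)))) (1 - \<nu>) < \<gamma>"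
    and A6_gamma_hi: "\<gamma> < 1 - \<theta> / 2 - \<beta>\<^sub>2 - \<theta> / 2 * \<beta>\<^sub>1"
  shows "AE \<omega> in M. \<exists>K. \<forall>\<^sub>F N in sequentially.
     \<forall>k\<in>{1..kn (nN N)}. \<forall>l\<in>{1..Js N + p}.
       \<bar>1 / (real (nN N) * real N) * (\<Sum>i=1..nN N. (\<xi> i k \<omega> - U\<^sub>\<xi> i k \<omega>) *
          (\<Sum>j=1..N. Bspline (Js N) p l (real j / real N) * \<sigma> (real j / real N)
                      * (\<epsilon> i j \<omega> - U\<^sub>\<epsilon> i j \<omega>)))\<bar>
       \<le> K * (real (nN N) powr \<beta>\<^sub>1 * real N powr (\<beta>\<^sub>2 - 1))"
proof -
  obtain L where hoelder: "\<And>x y. x \<in> {0..1} \<Longrightarrow> y \<in> {0..1} \<Longrightarrow> \<bar>\<sigma> x - \<sigma> y\<bar> \<le> L * \<bar>x - y\<bar> powr \<nu>"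
    using in_hoelder_zero_imp_hoelder_bound[OF A2_sigma] by blast
  have bound: "\<And>x. x \<in> {0..1} \<Longrightarrow> \<bar>\<sigma> x\<bar> \<le> \<bar>\<sigma> 0\<bar> + L"
    using hoelder_imp_abs_le[OF hoelder] A2_nu(1) by simp
  have "(\<lambda>N. 1 / d N) \<in> O(\<lambda>N. d N + 1 / d N)"
    using A6_d_pos by (intro landau_o.big_mono always_eventually) (auto simp: less_imp_le)
  then obtain c where knots: "\<forall>\<^sub>F N in sequentially. real N powr (1 - \<nu>) \<le> c * real (Js N)"
    using powr_bigo_bigtheta_powr_log_factor[OF A6_Js A6_d_pos landau_o.big_trans[OF _ A6_d], of "1 - \<nu>"] A6_gamma_lo
    by (auto elim!: landau_o.bigE)
  have U_meas: "U\<^sub>\<xi> i k \<in> borel_measurable M" "U\<^sub>\<epsilon> i k \<in> borel_measurable M" if "i \<ge> 1" "k \<ge> 1" for i k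
    using distributed_measurable[OF A5_gauss_xi[OF that]] distributed_measurable[OF A5_gauss_eps[OF that]]
    by simp_all
  have "AE \<omega> in M. \<forall>\<^sub>F n in sequentially. \<forall>k\<in>{1..kn n}. \<forall>t\<in>{1..n}.
      \<bar>\<Sum>i=1..t. \<xi> i k \<omega> - U\<^sub>\<xi> i k \<omega>\<bar> \<le> real n powr \<beta>\<^sub>1"
    by (rule AE_eventually_partial_sums_le[OF P _ A5_xi A5_consts(3)]) (intro borel_measurable_diff xi_meas U_meas)
  moreover have "AE \<omega> in M. \<forall>\<^sub>F N in sequentially. \<forall>i\<in>{1..nN N}. \<forall>t\<in>{1..N}.
      \<bar>\<Sum>j=1..t. \<epsilon> i j \<omega> - U\<^sub>\<epsilon> i j \<omega>\<bar> \<le> real N powr \<beta>\<^sub>2"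
    by (rule AE_eventually_partial_sums_le[OF P _ A5_eps A5_consts(4)]) (intro borel_measurable_diff eps_meas U_meas)
  ultimately show ?thesis
  proof eventually_elim
    case (elim \<omega>)
    show ?case
      using eventually_Bspline_double_sum_rate[OF hoelder bound A2_nu(1) A3_lim knots elim] by blast
  qed
qed

end
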